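(* Let $t$ be a positive integer. The following are equivalent: (i) for every set $\{G_1,\dots,G_t\}$ of $t$ graphs from $GRA_\omega$ there exists a graph $G \in GRA_\omega$ such that for every $i=1,\dots,t$ the graphs $G$ and $G_i$ are independent (i.e. $G \not\to G_i$ and $G_i \not\to G$); (ii) $t = 1$.
   Context: All graphs are simple, undirected and loopless. A homomorphism $G \to G'$ is a vertex map preserving edges; $G \to G'$ means one exists. $K_\omega$ denotes the countably infinite complete graph. $GRA_\omega$ denotes the class of all countable non-bipartite graphs that do not contain $K_\omega$ as a subgraph. Two graphs are independent if there is no homomorphism between them in either direction. *)

theory Defs
  imports Main
begin

text \<open>A countable simple graph: vertex set a subset of nat, with an adjacency relation.
  Every countable graph is isomorphic to one of this form.\<close>
type_synonym graph = "nat set \<times> (nat \<Rightarrow> nat \<Rightarrow> bool)"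

definition verts :: "graph \<Rightarrow> nat set" where "verts G = fst G"
definition adj :: "graph \<Rightarrow> nat \<Rightarrow> nat \<Rightarrow> bool" where "adj G = snd G"

definition wf_graph :: "graph \<Rightarrow> bool" where
  "wf_graph G \<longleftrightarrow> (\<forall>u v. adj G u v \<longrightarrow> u \<in> verts G \<and> v \<in> verts G)
     \<and> (\<forall>u v. adj G u v \<longrightarrow> adj G v u) \<and> (\<forall>u. \<not> adj G u u)"

definition is_hom :: "graph \<Rightarrow> graph \<Rightarrow> (nat \<Rightarrow> nat) \<Rightarrow> bool" where
  "is_hom G H f \<longleftrightarrow> (\<forall>v\<in>verts G. f v \<in> verts H)
     \<and> (\<forall>u v. adj G u v \<longrightarrow> adj H (f u) (f v))"

definition hom_to :: "graph \<Rightarrow> graph \<Rightarrow> bool" where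
  "hom_to G H \<longleftrightarrow> (\<exists>f. is_hom G H f)"

definition bipartite :: "graph \<Rightarrow> bool" where
  "bipartite G \<longleftrightarrow> (\<exists>c :: nat \<Rightarrow> bool. \<forall>u v. adj G u v \<longrightarrow> c u \<noteq> c v)"

definition contains_K_omega :: "graph \<Rightarrow> bool" where
  "contains_K_omega G \<longleftrightarrow> (\<exists>S. S \<subseteq> verts G \<and> infinite S
       \<and> (\<forall>u\<in>S. \<forall>v\<in>S. u \<noteq> v \<longrightarrow> adj G u v))"

definition GRA_omega :: "graph \<Rightarrow> bool" where
  "GRA_omega G \<longleftrightarrow> wf_graph G \<and> \<not> bipartite G \<and> \<not> contains_K_omega G"

definition independent :: "graph \<Rightarrow> graph \<Rightarrow> bool" where
  "independent G H \<longleftrightarrow> \<not> hom_to G H \<and> \<not> hom_to H G"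

end

theory Submission
  imports Defs "HOL-Library.Nat_Bijection" "HOL-Library.Ramsey" "HOL-Library.Sublist"
begin

text \<open>For \<open>t = 1\<close>: a graph \<open>G \<in> GRA\<^sub>\<omega>\<close> has an odd closed walk, of length \<open>L\<close> say. Let \<open>T(G)\<close> be
  the tree of finite cliques of \<open>G\<close>, ordered by extension; it lies in \<open>GRA\<^sub>\<omega>\<close>, and a homomorphism
  \<open>T(G) \<rightarrow> G\<close> would grow an infinite clique. So if \<open>G \<not>\<rightarrow> T(G)\<close>, then \<open>T(G)\<close> is independent of
  \<open>G\<close>. Otherwise take the shift graph on increasing \<open>(L+4)\<close>-tuples: it has no odd closed walks of
  length \<open>\<le> L\<close>, so \<open>G\<close> does not map to it; and by Ramsey's theorem no shift graph maps to the
  clique tree of a graph without \<open>K\<^sub>\<omega>\<close>, so, as \<open>G \<rightarrow> T(G)\<close>, it does not map to \<open>G\<close> either.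

  For \<open>t \<ge> 2\<close>: every graph either contains a triangle, and then \<open>K\<^sub>3\<close> maps to it, or is
  triangle-free, and then it maps to a universal countable triangle-free graph; both of these
  graphs lie in \<open>GRA\<^sub>\<omega>\<close>.\<close>

section \<open>Homomorphisms and walks\<close>

lemma wf_graph_sym: "wf_graph G \<Longrightarrow> adj G u v \<Longrightarrow> adj G v u"
  unfolding wf_graph_def by blast

lemma wf_graph_irrefl: "wf_graph G \<Longrightarrow> \<not> adj G u u"
  unfolding wf_graph_def by blast

lemma wf_graph_adj_verts: "wf_graph G \<Longrightarrow> adj G u v \<Longrightarrow> u \<in> verts G \<and> v \<in> verts G"
  unfolding wf_graph_def by blast

lemma is_hom_comp: "is_hom G H f \<Longrightarrow> is_hom H K g \<Longrightarrow> is_hom G K (g \<circ> f)"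
  unfolding is_hom_def by auto

lemma hom_to_trans: "hom_to G H \<Longrightarrow> hom_to H K \<Longrightarrow> hom_to G K"
  unfolding hom_to_def using is_hom_comp by blast

definition walk_betw :: "graph \<Rightarrow> nat \<Rightarrow> nat \<Rightarrow> nat \<Rightarrow> bool" where
  "walk_betw G u v n \<longleftrightarrow> (\<exists>w. w 0 = u \<and> w n = v \<and> (\<forall>t<n. adj G (w t) (w (Suc t))))"

lemma walk_betw_refl: "walk_betw G u u 0"
  unfolding walk_betw_def by auto

lemma walk_betw_edge: "adj G u v \<Longrightarrow> walk_betw G u v 1"
  unfolding walk_betw_def by (rule exI[of _ "\<lambda>t. if t = 0 then u else v"]) auto

lemma walk_betw_trans:
  assumes "walk_betw G u v a" "walk_betw G v x b"
  shows "walk_betw G u x (a + b)"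
proof -
  obtain w1 where w1: "w1 0 = u" "w1 a = v" "\<forall>t<a. adj G (w1 t) (w1 (Suc t))"
    using assms(1) unfolding walk_betw_def by blast
  obtain w2 where w2: "w2 0 = v" "w2 b = x" "\<forall>t<b. adj G (w2 t) (w2 (Suc t))"
    using assms(2) unfolding walk_betw_def by blast
  define w where "w t = (if t \<le> a then w1 t else w2 (t - a))" for t
  have "adj G (w t) (w (Suc t))" if "t < a + b" for t
  proof (cases "t < a")
    case False
    then have "Suc t - a = Suc (t - a)" by simp
    then show ?thesis using w1 w2 False that unfolding w_def by (auto simp: le_Suc_eq)
  qed (use w1 in \<open>auto simp: w_def\<close>)
  moreover have "w 0 = u" "w (a + b) = x" using w1 w2 unfolding w_def by auto
  ultimately show ?thesis unfolding walk_betw_def by blast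
qed

lemma walk_betw_rev:
  assumes "wf_graph G" "walk_betw G u v n"
  shows "walk_betw G v u n"
proof -
  obtain w where w: "w 0 = u" "w n = v" "\<forall>t<n. adj G (w t) (w (Suc t))"
    using assms(2) unfolding walk_betw_def by blast
  have "adj G (w (n - t)) (w (n - Suc t))" if "t < n" for t
  proof -
    have "adj G (w (n - Suc t)) (w (Suc (n - Suc t)))" using that w(3) by simp
    then show ?thesis using that wf_graph_sym[OF assms(1)] by (simp add: Suc_diff_Suc)
  qed
  then have "\<forall>t<n. adj G (w (n - t)) (w (n - Suc t))" by blast
  then show ?thesis unfolding walk_betw_def using w by (intro exI[of _ "\<lambda>t. w (n - t)"]) auto
qed

lemma walk_betw_hom: "is_hom G H f \<Longrightarrow> walk_betw G u v n \<Longrightarrow> walk_betw H (f u) (f v) n"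
  unfolding is_hom_def walk_betw_def by (metis comp_apply)

lemma walk_betw_parity:
  assumes "wf_graph G" and no_odd: "\<nexists>z n. odd n \<and> walk_betw G z z n"
    and "walk_betw G u v a" "walk_betw G u v b"
  shows "even a \<longleftrightarrow> even b"
proof -
  have "walk_betw G u u (a + b)"
    using walk_betw_trans[OF assms(3) walk_betw_rev[OF assms(1,4)]] .
  then have "even (a + b)" using no_odd by blast
  then show ?thesis by simp
qed

text \<open>Colour each vertex by the parity of a walk to it from a fixed representative of its
  component; without odd closed walks this parity does not depend on the walk.\<close>
lemma not_bipartite_odd_closed_walk:
  assumes wf: "wf_graph G" and "\<not> bipartite G"
  shows "\<exists>z n. odd n \<and> walk_betw G z z n"
proof (rule ccontr)
  assume no_odd: "\<nexists>z n. odd n \<and> walk_betw G z z n"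
  define rep where "rep u = (SOME z. \<exists>n. walk_betw G z u n)" for u
  define c where "c u \<longleftrightarrow> (\<exists>n. even n \<and> walk_betw G (rep u) u n)" for u
  have "c u \<noteq> c v" if e: "adj G u v" for u v
  proof -
    have "(\<lambda>z. \<exists>n. walk_betw G z u n) = (\<lambda>z. \<exists>n. walk_betw G z v n)"
      using walk_betw_trans[OF _ walk_betw_edge[OF e]]
        walk_betw_trans[OF _ walk_betw_edge[OF wf_graph_sym[OF wf e]]] by blast
    then have rep: "rep v = rep u" unfolding rep_def by simp
    have "\<exists>n. walk_betw G (rep u) u n"
      unfolding rep_def by (rule someI_ex) (use walk_betw_refl in blast)
    then obtain a where a: "walk_betw G (rep u) u a" by blast
    have a1: "walk_betw G (rep u) v (a + 1)" using walk_betw_trans[OF a walk_betw_edge[OF e]] .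
    have "c u \<longleftrightarrow> even a" "c v \<longleftrightarrow> even (a + 1)"
      using walk_betw_parity[OF wf no_odd] a a1 rep unfolding c_def by metis+
    then show ?thesis by simp
  qed
  then show False using assms(2) unfolding bipartite_def by blast
qed

definition triangle_free :: "graph \<Rightarrow> bool" where
  "triangle_free G \<longleftrightarrow> (\<forall>a b c. adj G a b \<longrightarrow> adj G b c \<longrightarrow> \<not> adj G a c)"

lemma triangle_free_if_no_short_odd_walk:
  assumes "wf_graph G" "\<And>z. \<not> walk_betw G z z 3"
  shows "triangle_free G"
  unfolding triangle_free_def
proof (intro allI impI notI)
  fix a b c assume "adj G a b" "adj G b c" "adj G a c"
  then have "walk_betw G a a (1 + 1 + 1)"
    by (meson assms(1) walk_betw_edge walk_betw_trans wf_graph_sym)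
  then show False using assms(2) by (simp add: numeral_3_eq_3)
qed

lemma triangle_free_no_K_omega: "triangle_free G \<Longrightarrow> \<not> contains_K_omega G"
proof
  assume "triangle_free G" "contains_K_omega G"
  then obtain S where S: "infinite S" "\<forall>u\<in>S. \<forall>v\<in>S. u \<noteq> v \<longrightarrow> adj G u v"
    unfolding contains_K_omega_def by blast
  obtain a b c where "a \<in> S" "b \<in> S - {a}" "c \<in> S - {a, b}"
    using S(1) by (metis ex_in_conv finite.emptyI finite_Diff2 finite_insert)
  then show False using S(2) \<open>triangle_free G\<close> unfolding triangle_free_def by blast
qed

lemma bipartite_triangle_free:
  assumes "bipartite G" shows "triangle_free G"
proof -
  obtain c :: "nat \<Rightarrow> bool" where c: "\<And>u v. adj G u v \<Longrightarrow> c u \<noteq> c v"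
    using assms unfolding bipartite_def by blast
  have "c a \<noteq> c b \<Longrightarrow> c b \<noteq> c d \<Longrightarrow> c a = c d" for a b d by blast
  then show ?thesis unfolding triangle_free_def using c by metis
qed

definition K3 :: graph where
  "K3 = ({0, 1, 2}, \<lambda>u v. u \<noteq> v \<and> u < 3 \<and> v < 3)"

lemma GRA_omega_K3: "GRA_omega K3"
proof -
  have "adj K3 0 1" "adj K3 1 2" "adj K3 0 2" by (simp_all add: K3_def adj_def)
  then have "\<not> bipartite K3" using bipartite_triangle_free unfolding triangle_free_def by blast
  moreover have "\<not> contains_K_omega K3"
    unfolding contains_K_omega_def K3_def verts_def by (auto dest: finite_subset)
  moreover have "wf_graph K3" unfolding wf_graph_def K3_def adj_def verts_def by auto
  ultimately show ?thesis unfolding GRA_omega_def by blast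
qed

lemma hom_to_K3_if_not_triangle_free:
  assumes wf: "wf_graph G" and "\<not> triangle_free G"
  shows "hom_to K3 G"
proof -
  obtain a b c where e: "adj G a b" "adj G b c" "adj G a c"
    using assms(2) unfolding triangle_free_def by blast
  define f where "f v = (if v = 0 then a else if v = 1 then b else c)" for v :: nat
  have "adj G (f u) (f v)" if "adj K3 u v" for u v
  proof -
    have "u \<noteq> v" "u \<in> {0, 1, 2}" "v \<in> {0, 1, 2}" using that unfolding K3_def adj_def by auto
    moreover have "adj G b a" "adj G c b" "adj G c a" using e wf_graph_sym[OF wf] by blast+
    ultimately show ?thesis using e unfolding f_def by auto
  qed
  moreover have "f v \<in> verts G" for v
    using e wf_graph_adj_verts[OF wf] unfolding f_def by auto
  ultimately show ?thesis unfolding hom_to_def is_hom_def by blast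
qed

section \<open>Clique trees\<close>

definition clique_list :: "graph \<Rightarrow> nat list \<Rightarrow> bool" where
  "clique_list G s \<longleftrightarrow> set s \<subseteq> verts G
     \<and> (\<forall>i<length s. \<forall>j<length s. i \<noteq> j \<longrightarrow> adj G (s ! i) (s ! j))"

lemma prefix_nth: "prefix s s' \<Longrightarrow> i < length s \<Longrightarrow> s' ! i = s ! i"
  by (auto elim!: prefixE simp: nth_append)

lemma prefix_same_length: "prefix s s' \<Longrightarrow> length s = length s' \<Longrightarrow> s = s'"
  by (auto elim!: prefixE)

lemma prefix_chain:
  assumes "\<And>n. prefix (s n) (s (Suc n))"
  shows "m \<le> n \<Longrightarrow> prefix (s m) (s n)"
proof (induct n)
  case (Suc n)
  show ?case
  proof (cases "m = Suc n")
    case False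
    then have "prefix (s m) (s n)" using Suc by simp
    then show ?thesis using assms[of n] by (rule prefix_order.trans)
  qed simp
qed simp

lemma clique_list_prefix:
  assumes "clique_list G s" "prefix s' s"
  shows "clique_list G s'"
proof -
  obtain zs where s: "s = s' @ zs" using assms(2) by (auto elim: prefixE)
  have "adj G (s' ! i) (s' ! j)" if "i < length s'" "j < length s'" "i \<noteq> j" for i j
    using assms(1) that unfolding s clique_list_def by (metis length_append nth_append trans_less_add1)
  then show ?thesis using assms(1) unfolding s clique_list_def by auto
qed

lemma clique_list_snoc:
  assumes "clique_list G s" "wf_graph G" "x \<in> verts G" "\<forall>y\<in>set s. adj G y x"
  shows "clique_list G (s @ [x])"
proof -
  have "\<forall>y\<in>set s. adj G x y" using assms(4) wf_graph_sym[OF assms(2)] by blast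
  then show ?thesis using assms(1,3,4) unfolding clique_list_def
    by (auto simp: nth_append less_Suc_eq)
qed

text \<open>The diagonal entries of a chain of cliques of unbounded length form an infinite clique.\<close>
lemma contains_K_omega_if_clique_chain:
  assumes wf: "wf_graph W" and cl: "\<forall>s\<in>S. clique_list W s"
    and chain: "\<forall>s\<in>S. \<forall>s'\<in>S. prefix s s' \<or> prefix s' s"
    and unbounded: "\<forall>n. \<exists>s\<in>S. n < length s"
  shows "contains_K_omega W"
proof -
  have "\<exists>g. \<forall>n. g n \<in> S \<and> n < length (g n)" using unbounded by (intro choice) blast
  then obtain g where g: "\<And>n. g n \<in> S" "\<And>n. n < length (g n)" by blast
  define c where "c n = g n ! n" for n
  have entry: "g j ! i = c i" if "i < length (g j)" for i j
  proof -
    have "prefix (g i) (g j) \<or> prefix (g j) (g i)" using chain g(1) by blast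
    then show ?thesis using prefix_nth g(2)[of i] that unfolding c_def by metis
  qed
  have adj_c: "adj W (c i) (c j)" if "i \<noteq> j" for i j
  proof -
    define m where "m = max i j"
    have "i < length (g m)" "j < length (g m)" using g(2)[of m] unfolding m_def by auto
    moreover have "clique_list W (g m)" using cl g(1) by blast
    ultimately show ?thesis using that entry unfolding clique_list_def by metis
  qed
  have "inj c"
    by (rule injI) (use adj_c wf_graph_irrefl[OF wf] in metis)
  moreover have "c n \<in> verts W" for n
    using cl g nth_mem[OF g(2)[of n]] unfolding clique_list_def c_def by blast
  ultimately show ?thesis
    unfolding contains_K_omega_def using adj_c range_inj_infinite
    by (intro exI[of _ "range c"]) (auto intro!: adj_c)
qed

lemma contains_K_omega_if_clique_sequence:
  assumes "wf_graph W" "\<And>n. clique_list W (s n)" "\<And>n. strict_prefix (s n) (s (Suc n))"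
  shows "contains_K_omega W"
proof (rule contains_K_omega_if_clique_chain[where S = "range s"])
  have "prefix (s m) (s n)" if "m \<le> n" for m n
    using prefix_chain assms(3) that by (meson prefix_order.less_imp_le)
  then show "\<forall>s1\<in>range s. \<forall>s2\<in>range s. prefix s1 s2 \<or> prefix s2 s1"
    using nat_le_linear by blast
  have "n \<le> length (s n)" for n
  proof (induct n)
    case (Suc n)
    then show ?case using prefix_length_less[OF assms(3)[of n]] by simp
  qed simp
  then show "\<forall>n. \<exists>s'\<in>range s. n < length s'"
    using Suc_le_lessD by blast
qed (use assms in auto)

definition clique_tree :: "graph \<Rightarrow> graph" where
  "clique_tree W = ({n. clique_list W (list_decode n)},
     \<lambda>m n. clique_list W (list_decode m) \<and> clique_list W (list_decode n)
       \<and> (strict_prefix (list_decode m) (list_decode n) \<or> strict_prefix (list_decode n) (list_decode m)))"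

lemma verts_clique_tree: "n \<in> verts (clique_tree W) \<longleftrightarrow> clique_list W (list_decode n)"
  by (simp add: clique_tree_def verts_def)

lemma adj_clique_tree: "adj (clique_tree W) m n \<longleftrightarrow>
    clique_list W (list_decode m) \<and> clique_list W (list_decode n)
    \<and> (strict_prefix (list_decode m) (list_decode n) \<or> strict_prefix (list_decode n) (list_decode m))"
  by (simp add: clique_tree_def adj_def)

lemma wf_clique_tree: "wf_graph (clique_tree W)"
  unfolding wf_graph_def verts_clique_tree adj_clique_tree by auto

lemma clique_tree_no_K_omega:
  assumes "wf_graph W" "\<not> contains_K_omega W"
  shows "\<not> contains_K_omega (clique_tree W)"
proof
  assume "contains_K_omega (clique_tree W)"
  then obtain S where S: "S \<subseteq> verts (clique_tree W)" "infinite S"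
      "\<forall>u\<in>S. \<forall>v\<in>S. u \<noteq> v \<longrightarrow> adj (clique_tree W) u v"
    unfolding contains_K_omega_def by blast
  define L where "L = list_decode ` S"
  have cl: "\<forall>s\<in>L. clique_list W s" using S(1) verts_clique_tree unfolding L_def by blast
  have chain: "\<forall>s\<in>L. \<forall>s'\<in>L. prefix s s' \<or> prefix s' s"
  proof (intro ballI)
    fix s s' assume "s \<in> L" "s' \<in> L"
    then obtain u v where "u \<in> S" "v \<in> S" "s = list_decode u" "s' = list_decode v"
      unfolding L_def by blast
    then show "prefix s s' \<or> prefix s' s"
      using S(3) unfolding adj_clique_tree by (cases "u = v") (auto intro: prefix_order.less_imp_le)
  qed
  have "infinite L" unfolding L_def using S(2) inj_list_decode
    by (metis finite_imageD inj_on_subset subset_UNIV)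
  moreover have "inj_on length L"
  proof (rule inj_onI)
    fix s s' assume "s \<in> L" "s' \<in> L" "length s = length s'"
    then show "s = s'" using chain prefix_same_length by metis
  qed
  ultimately have "infinite (length ` L)" using finite_imageD by blast
  then have "\<forall>n. \<exists>s\<in>L. n < length s" using infinite_nat_iff_unbounded by auto
  then show False using contains_K_omega_if_clique_chain assms cl chain by blast
qed

text \<open>A homomorphism \<open>f\<close> assigns to every clique \<open>s\<close> a vertex adjacent to all of \<open>s\<close>;
  iterating \<open>s \<mapsto> s @ [f s]\<close> from the empty clique builds an infinite clique.\<close>
lemma clique_tree_not_hom_to_base:
  assumes wf: "wf_graph W" and no_K: "\<not> contains_K_omega W"
  shows "\<not> hom_to (clique_tree W) W"
proof
  assume "hom_to (clique_tree W) W"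
  then obtain f where f: "is_hom (clique_tree W) W f" unfolding hom_to_def by blast
  define s where "s = rec_nat [] (\<lambda>_ sk. sk @ [f (list_encode sk)])"
  have s0: "s 0 = []" and sSuc: "s (Suc k) = s k @ [f (list_encode (s k))]" for k
    unfolding s_def by simp_all
  have len: "length (s k) = k" for k by (induct k) (simp_all add: s0 sSuc)
  have chain: "prefix (s j) (s k)" if "j \<le> k" for j k
    using prefix_chain[of s] that by (simp add: sSuc)
  have entry: "s k ! i = f (list_encode (s i))" if "i < k" for i k
    using prefix_nth[OF chain[of "Suc i" k]] that by (simp add: sSuc len nth_append)
  have cl: "clique_list W (s k)" for k
  proof (induct k)
    case 0 then show ?case by (simp add: s0 clique_list_def)
  next
    case (Suc k)
    have "list_encode (s k) \<in> verts (clique_tree W)" using Suc by (simp add: verts_clique_tree)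
    then have vert: "f (list_encode (s k)) \<in> verts W" using f unfolding is_hom_def by blast
    have "adj W (f (list_encode (s i))) (f (list_encode (s k)))" if "i < k" for i
    proof -
      have "strict_prefix (s i) (s k)"
      proof (rule strict_prefixI)
        show "prefix (s i) (s k)" using chain that by simp
        show "s i \<noteq> s k" using len[of i] len[of k] that by auto
      qed
      then have "adj (clique_tree W) (list_encode (s i)) (list_encode (s k))"
        using Suc clique_list_prefix chain[of i k] that by (simp add: adj_clique_tree)
      then show ?thesis using f unfolding is_hom_def by blast
    qed
    then have "\<forall>y\<in>set (s k). adj W y (f (list_encode (s k)))"
      by (auto simp: in_set_conv_nth len entry)
    then show ?case unfolding sSuc using clique_list_snoc Suc wf vert by blast
  qed
  moreover have "strict_prefix (s k) (s (Suc k))" for k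
    unfolding sSuc by (rule strict_prefixI') simp
  ultimately show False using contains_K_omega_if_clique_sequence wf no_K by blast
qed

lemma bipartite_hom_to_clique_tree:
  assumes "bipartite G" "v \<in> verts W"
  shows "hom_to G (clique_tree W)"
proof -
  obtain c :: "nat \<Rightarrow> bool" where c: "\<forall>u u'. adj G u u' \<longrightarrow> c u \<noteq> c u'"
    using assms(1) unfolding bipartite_def by blast
  define h where "h u = list_encode (if c u then [] else [v])" for u
  have "clique_list W []" "clique_list W [v]" using assms(2) unfolding clique_list_def by auto
  then have "is_hom G (clique_tree W) h"
    unfolding is_hom_def verts_clique_tree h_def
    using c by (auto simp: adj_clique_tree split: if_splits)
  then show ?thesis unfolding hom_to_def by blast
qed

lemma GRA_omega_clique_tree:
  assumes "GRA_omega W"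
  shows "GRA_omega (clique_tree W)"
proof -
  have wf: "wf_graph W" and "\<not> bipartite W" and no_K: "\<not> contains_K_omega W"
    using assms unfolding GRA_omega_def by auto
  then obtain u v where e: "adj W u v" unfolding bipartite_def by blast
  then have "clique_list W []" "clique_list W [u]" "clique_list W [u, v]"
    using wf_graph_adj_verts[OF wf e] wf_graph_sym[OF wf e]
    unfolding clique_list_def by (auto simp: less_Suc_eq nth_Cons')
  then have "adj (clique_tree W) (list_encode []) (list_encode [u])"
    "adj (clique_tree W) (list_encode [u]) (list_encode [u, v])"
    "adj (clique_tree W) (list_encode []) (list_encode [u, v])"
    by (simp_all add: adj_clique_tree)
  then have "\<not> triangle_free (clique_tree W)" unfolding triangle_free_def by blast
  then have "\<not> bipartite (clique_tree W)" using bipartite_triangle_free by blast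
  then show ?thesis
    unfolding GRA_omega_def using wf_clique_tree clique_tree_no_K_omega[OF wf no_K] by blast
qed

section \<open>Shift graphs\<close>

definition tuples :: "nat \<Rightarrow> nat set \<Rightarrow> nat list set" where
  "tuples r A = {xs. length xs = r \<and> sorted_wrt (<) xs \<and> set xs \<subseteq> A}"

definition shift_graph :: "nat \<Rightarrow> graph" where
  "shift_graph r = ({n. list_decode n \<in> tuples r UNIV},
     \<lambda>m n. list_decode m \<in> tuples r UNIV \<and> list_decode n \<in> tuples r UNIV
       \<and> (tl (list_decode m) = butlast (list_decode n) \<or> tl (list_decode n) = butlast (list_decode m)))"

lemma verts_shift_graph: "n \<in> verts (shift_graph r) \<longleftrightarrow> list_decode n \<in> tuples r UNIV"
  by (simp add: shift_graph_def verts_def)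

lemma adj_shift_graph: "adj (shift_graph r) m n \<longleftrightarrow>
    list_decode m \<in> tuples r UNIV \<and> list_decode n \<in> tuples r UNIV
    \<and> (tl (list_decode m) = butlast (list_decode n) \<or> tl (list_decode n) = butlast (list_decode m))"
  by (simp add: shift_graph_def adj_def)

lemma tl_neq_butlast:
  fixes xs :: "nat list"
  assumes "sorted_wrt (<) xs" "2 \<le> length xs"
  shows "tl xs \<noteq> butlast xs"
proof
  assume eq: "tl xs = butlast xs"
  have "xs ! 1 = tl xs ! 0" using assms(2) by (simp add: nth_tl)
  also have "\<dots> = xs ! 0" using assms(2) by (simp add: eq nth_butlast)
  finally have "xs ! 1 = xs ! 0" .
  moreover have "xs ! 0 < xs ! 1" using assms by (simp add: sorted_wrt_iff_nth_less)
  ultimately show False by simp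
qed

lemma wf_shift_graph: "2 \<le> r \<Longrightarrow> wf_graph (shift_graph r)"
  unfolding wf_graph_def verts_shift_graph adj_shift_graph tuples_def
  using tl_neq_butlast by auto

definition shift_offset :: "(nat \<Rightarrow> nat list) \<Rightarrow> nat \<Rightarrow> int" where
  "shift_offset v t = (\<Sum>s<t. if tl (v s) = butlast (v (Suc s)) then 1 else -1)"

lemma shift_offset_0 [simp]: "shift_offset v 0 = 0"
  by (simp add: shift_offset_def)

lemma shift_offset_Suc: "shift_offset v (Suc t) =
    shift_offset v t + (if tl (v t) = butlast (v (Suc t)) then 1 else -1)"
  by (simp add: shift_offset_def)

lemma shift_offset_parity: "even (shift_offset v t + int t)"
  by (induct t) (auto simp: shift_offset_Suc)

lemma shift_offset_dist: "a \<le> b \<Longrightarrow> \<bar>shift_offset v b - shift_offset v a\<bar> \<le> int (b - a)"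
  by (induct b) (auto simp: shift_offset_Suc le_Suc_eq Suc_diff_le)

text \<open>A forward shift moves every entry one position to the left, a backward shift one to the
  right; so as long as the position stays inside the tuple, the entry is carried along.\<close>
lemma shift_sequence_tracks_entry:
  assumes len: "\<forall>t\<le>L. length (v t) = r"
    and step: "\<forall>t<L. tl (v t) = butlast (v (Suc t)) \<or> tl (v (Suc t)) = butlast (v t)"
  shows "t \<le> L \<Longrightarrow> \<forall>t'\<le>t. 0 \<le> p - shift_offset v t' \<and> p - shift_offset v t' < int r
    \<Longrightarrow> v t ! nat (p - shift_offset v t) = v 0 ! nat p"
proof (induct t)
  case (Suc t)
  let ?i = "nat (p - shift_offset v t)" and ?j = "nat (p - shift_offset v (Suc t))"
  have lengths: "length (v t) = r" "length (v (Suc t)) = r" using len Suc.prems(1) by auto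
  have "\<forall>t'\<le>t. 0 \<le> p - shift_offset v t' \<and> p - shift_offset v t' < int r"
    using Suc.prems(2) by simp
  then have IH: "v t ! ?i = v 0 ! nat p" using Suc by simp
  have bounds: "?i < r" "?j < r"
    using Suc.prems(2)[rule_format, of t] Suc.prems(2)[rule_format, of "Suc t"] by auto
  have "v (Suc t) ! ?j = v t ! ?i"
  proof (cases "tl (v t) = butlast (v (Suc t))")
    case True
    then have "?i = Suc ?j" using Suc.prems(2)[rule_format, of "Suc t"] by (auto simp: shift_offset_Suc)
    then have "v (Suc t) ! ?j = butlast (v (Suc t)) ! ?j" "tl (v t) ! ?j = v t ! ?i"
      using lengths bounds by (simp_all add: nth_butlast nth_tl)
    then show ?thesis using True by simp
  next
    case False
    then have "tl (v (Suc t)) = butlast (v t)" using step Suc.prems(1) Suc_le_lessD by blast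
    moreover have "?j = Suc ?i" using False Suc.prems(2)[rule_format, of t]
      by (auto simp: shift_offset_Suc)
    then have "v (Suc t) ! ?j = tl (v (Suc t)) ! ?i" "butlast (v t) ! ?i = v t ! ?i"
      using lengths bounds by (simp_all add: nth_butlast nth_tl)
    ultimately show ?thesis by simp
  qed
  then show ?case using IH by simp
qed simp

lemma shift_offset_window:
  "\<exists>M. \<forall>t\<le>L. 0 \<le> M - shift_offset v t \<and> M - shift_offset v t \<le> int L"
proof -
  define M where "M = Max (shift_offset v ` {..L})"
  have "M \<in> shift_offset v ` {..L}" unfolding M_def by (rule Max_in) auto
  then obtain s where s: "s \<le> L" "shift_offset v s = M" by auto
  have "0 \<le> M - shift_offset v t \<and> M - shift_offset v t \<le> int L" if "t \<le> L" for t
  proof -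
    have "shift_offset v t \<le> M" unfolding M_def using that by simp
    moreover have "\<bar>shift_offset v s - shift_offset v t\<bar> \<le> int L"
      using shift_offset_dist[of s t v] shift_offset_dist[of t s v] s(1) that
      by (cases "s \<le> t") (auto simp: abs_minus_commute)
    ultimately show ?thesis using s by auto
  qed
  then show ?thesis by blast
qed

lemma shift_graph_odd_girth:
  assumes walk: "walk_betw (shift_graph r) u u L" and "odd L"
  shows "r \<le> L"
proof (rule ccontr)
  assume "\<not> r \<le> L"
  obtain w where w: "w 0 = u" "w L = u" "\<forall>t<L. adj (shift_graph r) (w t) (w (Suc t))"
    using walk unfolding walk_betw_def by blast
  define v where "v t = list_decode (w t)" for t
  define d where "d = shift_offset v"
  have tuple: "v t \<in> tuples r UNIV" if "t \<le> L" for t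
  proof (cases "t < L")
    case True
    then show ?thesis using w(3) unfolding adj_shift_graph v_def by blast
  next
    case False
    then have "L - 1 < L" "t = Suc (L - 1)" using that \<open>odd L\<close> by (auto simp: odd_pos)
    then show ?thesis using w(3) unfolding adj_shift_graph v_def by metis
  qed
  have step: "\<forall>t<L. tl (v t) = butlast (v (Suc t)) \<or> tl (v (Suc t)) = butlast (v t)"
    using w(3) unfolding adj_shift_graph v_def by blast
  have len: "\<forall>t\<le>L. length (v t) = r" using tuple unfolding tuples_def by blast
  obtain M where M: "\<forall>t\<le>L. 0 \<le> M - d t \<and> M - d t \<le> int L"
    using shift_offset_window unfolding d_def by blast
  have bounds: "0 \<le> M - d t \<and> M - d t < int r" if "t \<le> L" for t
    using M that \<open>\<not> r \<le> L\<close> by force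
  have "v L ! nat (M - d L) = v 0 ! nat M"
    using shift_sequence_tracks_entry[OF len step, of L M] bounds unfolding d_def by blast
  moreover have "v L = v 0" using w unfolding v_def by simp
  moreover have "d L \<noteq> 0" using shift_offset_parity[of v L] \<open>odd L\<close> unfolding d_def by auto
  moreover have "distinct (v 0)" "length (v 0) = r"
    using tuple[of 0] unfolding tuples_def by (auto simp: strict_sorted_iff)
  moreover have "nat (M - d L) \<noteq> nat M" "nat (M - d L) < r" "nat M < r"
    using bounds[of 0] bounds[of L] \<open>d L \<noteq> 0\<close> unfolding d_def by auto
  ultimately show False by (simp add: nth_eq_iff_index_eq)
qed

lemma tuple_above:
  assumes "infinite B"
  obtains xs where "xs \<in> tuples n B" "\<forall>x\<in>set xs. m < x"
proof -
  have "infinite (B - {..m})" using assms by simp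
  then obtain F where F: "finite F" "card F = n" "F \<subseteq> B - {..m}"
    using infinite_arbitrarily_large by blast
  then have "sorted_list_of_set F \<in> tuples n B" unfolding tuples_def by auto
  moreover have "\<forall>x\<in>set (sorted_list_of_set F). m < x" using F by auto
  ultimately show ?thesis using that by blast
qed

lemma tuples_interpolate:
  assumes "X \<in> tuples r B" "Z \<in> tuples r B" "\<forall>x\<in>set X. \<forall>z\<in>set Z. x < z" "i \<le> r"
  shows "drop i X @ take i Z \<in> tuples r B"
proof -
  have "sorted_wrt (<) (drop i X)" "sorted_wrt (<) (take i Z)"
    using assms(1,2) unfolding tuples_def by (auto simp: sorted_wrt_drop sorted_wrt_take)
  moreover have "\<forall>x\<in>set (drop i X). \<forall>z\<in>set (take i Z). x < z"
    using assms(3) by (meson in_set_dropD in_set_takeD)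
  ultimately show ?thesis using assms unfolding tuples_def
    by (auto simp: sorted_wrt_append dest: in_set_dropD in_set_takeD)
qed

lemma tl_interpolate:
  assumes "length X = r" "length Z = r" "i < r"
  shows "tl (drop i X @ take i Z) = butlast (drop (Suc i) X @ take (Suc i) Z)"
proof -
  have "tl (drop i X @ take i Z) = drop (Suc i) X @ take i Z"
    using assms by (simp add: drop_Suc tl_drop)
  moreover have "butlast (take (Suc i) Z) = take i Z" "take (Suc i) Z \<noteq> []"
    using assms by (auto simp: butlast_take)
  ultimately show ?thesis by (simp add: butlast_append)
qed

text \<open>Both tuples are joined to a tuple \<open>Z\<close> lying above them, along the path
  \<open>drop i X @ take i Z\<close>, \<open>i = 0, \<dots>, r\<close>.\<close>
lemma constant_on_shift_tuples:
  assumes "infinite B"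
    and edge: "\<And>X Y. X \<in> tuples r B \<Longrightarrow> Y \<in> tuples r B \<Longrightarrow> tl X = butlast Y \<Longrightarrow> f X = f Y"
    and "X \<in> tuples r B" "Y \<in> tuples r B"
  shows "f X = f Y"
proof -
  have path: "f X' = f Z" if X': "X' \<in> tuples r B" and Z: "Z \<in> tuples r B"
    and below: "\<forall>x\<in>set X'. \<forall>z\<in>set Z. x < z" for X' Z
  proof -
    have len: "length X' = r" "length Z = r" using X' Z unfolding tuples_def by auto
    have "f (drop i X' @ take i Z) = f X'" if "i \<le> r" for i
      using that
    proof (induct i)
      case (Suc i)
      then show ?case
        using edge[OF tuples_interpolate[OF X' Z below] tuples_interpolate[OF X' Z below]
            tl_interpolate[OF len]] by simp
    qed simp
    from this[of r] show ?thesis using len by simp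
  qed
  obtain Z where Z: "Z \<in> tuples r B" "\<forall>z\<in>set Z. sum_list (X @ Y) < z"
    using tuple_above[OF assms(1)] by blast
  have "\<forall>x\<in>set X. \<forall>z\<in>set Z. x < z" "\<forall>y\<in>set Y. \<forall>z\<in>set Z. y < z"
    using Z(2) member_le_sum_list[of _ "X @ Y"] by fastforce+
  then show ?thesis using path assms(3,4) Z(1) by metis
qed

lemma tuples_butlast_tl:
  assumes "L \<in> tuples (Suc r) B"
  shows "butlast L \<in> tuples r B" "tl L \<in> tuples r B"
proof -
  have "tl L = drop 1 L" by (simp add: drop_Suc)
  then show "butlast L \<in> tuples r B" "tl L \<in> tuples r B"
    using assms unfolding tuples_def
    by (auto simp: butlast_conv_take sorted_wrt_take sorted_wrt_drop dest: in_set_takeD in_set_dropD)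
qed

lemma Ramsey_tuples:
  assumes "infinite A"
  obtains B where "B \<subseteq> A" "infinite B" "(\<forall>X\<in>tuples r B. Q X) \<or> (\<forall>X\<in>tuples r B. \<not> Q X)"
proof -
  define col where "col Z = (if Q (sorted_list_of_set Z) then 0 else 1 :: nat)" for Z
  have "\<exists>B t. B \<subseteq> A \<and> infinite B \<and> t < 2
      \<and> (\<forall>Z. Z \<subseteq> B \<and> finite Z \<and> card Z = r \<longrightarrow> col Z = t)"
    by (rule Ramsey[OF assms]) (simp add: col_def)
  then obtain B t where B: "B \<subseteq> A" "infinite B"
    and homogeneous: "\<forall>Z. Z \<subseteq> B \<and> finite Z \<and> card Z = r \<longrightarrow> col Z = t" by blast
  have "Q X \<longleftrightarrow> t = 0" if "X \<in> tuples r B" for X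
  proof -
    have "sorted_list_of_set (set X) = X" "card (set X) = r" "set X \<subseteq> B"
      using that unfolding tuples_def
      by (auto simp: strict_sorted_equal strict_sorted_iff distinct_card)
    then show ?thesis using homogeneous unfolding col_def by (metis finite_set zero_neq_one)
  qed
  then show ?thesis using that B by blast
qed

lemma prefix_snoc_nth: "prefix s ys \<Longrightarrow> length s < length ys \<Longrightarrow> prefix (s @ [ys ! length s]) ys"
  by (auto elim!: prefixE simp: neq_Nil_conv)

text \<open>On an infinite set where \<open>H = s\<close> either holds for all tuples or for none, it holds for none,
  because the adjacent tuples \<open>butlast L\<close> and \<open>tl L\<close> of an \<open>(r+1)\<close>-tuple \<open>L\<close> have distinct
  images. So there \<open>H\<close> strictly extends \<open>s\<close>, and its next entry is constant along edges, hence
  constant.\<close>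
lemma ramsey_extend_common_prefix:
  fixes H :: "nat list \<Rightarrow> nat list"
  assumes H_adj: "\<And>X Y. X \<in> tuples r UNIV \<Longrightarrow> Y \<in> tuples r UNIV \<Longrightarrow> tl X = butlast Y \<Longrightarrow>
      strict_prefix (H X) (H Y) \<or> strict_prefix (H Y) (H X)"
    and "infinite A" and A: "\<forall>X\<in>tuples r A. prefix s (H X)"
  shows "\<exists>B c. infinite B \<and> (\<forall>X\<in>tuples r B. prefix (s @ [c]) (H X))"
proof -
  obtain B where B: "B \<subseteq> A" "infinite B"
    and homogeneous: "(\<forall>X\<in>tuples r B. H X = s) \<or> (\<forall>X\<in>tuples r B. H X \<noteq> s)"
    by (rule Ramsey_tuples[OF \<open>infinite A\<close>, where Q = "\<lambda>X. H X = s"])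
  have tuple_A: "X \<in> tuples r A" and tuple_UNIV: "X \<in> tuples r UNIV" if "X \<in> tuples r B" for X
    using that B(1) unfolding tuples_def by auto
  obtain L where "L \<in> tuples (Suc r) B" using tuple_above[OF B(2)] by blast
  then have L: "butlast L \<in> tuples r B" "tl L \<in> tuples r B" by (rule tuples_butlast_tl)+
  moreover have "tl (butlast L) = butlast (tl L)" by (simp add: butlast_tl)
  ultimately have "strict_prefix (H (butlast L)) (H (tl L)) \<or> strict_prefix (H (tl L)) (H (butlast L))"
    using H_adj tuple_UNIV by blast
  then have "H (butlast L) \<noteq> H (tl L)" by auto
  then have "\<not> (\<forall>X\<in>tuples r B. H X = s)" using L by (cases "H (tl L) = s") auto
  then have none: "\<forall>X\<in>tuples r B. H X \<noteq> s" using homogeneous by blast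
  have longer: "length s < length (H X)" if "X \<in> tuples r B" for X
    using A tuple_A[OF that] none that
    by (metis prefix_length_le prefix_same_length le_neq_implies_less)
  define c where "c X = H X ! length s" for X
  have "c X = c Y" if "X \<in> tuples r B" "Y \<in> tuples r B" "tl X = butlast Y" for X Y
    using H_adj[OF tuple_UNIV[OF that(1)] tuple_UNIV[OF that(2)] that(3)] longer[OF that(1)]
      longer[OF that(2)] prefix_nth unfolding c_def by (metis prefix_order.less_imp_le)
  then have const: "c X = c Y" if "X \<in> tuples r B" "Y \<in> tuples r B" for X Y
    using constant_on_shift_tuples[OF B(2)] that by blast
  obtain X0 where X0: "X0 \<in> tuples r B" using tuple_above[OF B(2)] by blast
  have "prefix (s @ [c X0]) (H X)" if "X \<in> tuples r B" for X
    using prefix_snoc_nth[OF A[rule_format, OF tuple_A[OF that]] longer[OF that]]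
      const[OF that X0] unfolding c_def by simp
  then show ?thesis using B(2) by blast
qed

lemma ramsey_prefix_chain:
  fixes H :: "nat list \<Rightarrow> nat list"
  assumes H_adj: "\<And>X Y. X \<in> tuples r UNIV \<Longrightarrow> Y \<in> tuples r UNIV \<Longrightarrow> tl X = butlast Y \<Longrightarrow>
      strict_prefix (H X) (H Y) \<or> strict_prefix (H Y) (H X)"
  shows "\<exists>A s. \<forall>n. infinite (A n) \<and> (\<forall>X\<in>tuples r (A n). prefix (s n) (H X))
    \<and> strict_prefix (s n) (s (Suc n))"
proof -
  define P where "P As \<longleftrightarrow> infinite (fst As) \<and> (\<forall>X\<in>tuples r (fst As). prefix (snd As) (H X))"
    for As
  have P0: "P (UNIV, [])" unfolding P_def by simp
  have P_Suc: "\<exists>Bt. P Bt \<and> strict_prefix (snd As) (snd Bt)" if "P As" for As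
  proof -
    have "infinite (fst As)" "\<forall>X\<in>tuples r (fst As). prefix (snd As) (H X)"
      using that unfolding P_def by auto
    from ramsey_extend_common_prefix[where H = H and r = r, OF H_adj this]
    obtain B c where "infinite B" "\<forall>X\<in>tuples r B. prefix (snd As @ [c]) (H X)" by blast
    then have "P (B, snd As @ [c])" unfolding P_def by simp
    moreover have "strict_prefix (snd As) (snd As @ [c])" by (rule strict_prefixI') simp
    ultimately show ?thesis by (intro exI[of _ "(B, snd As @ [c])"]) simp
  qed
  have "\<exists>F. \<forall>n. P (F n) \<and> strict_prefix (snd (F n)) (snd (F (Suc n)))"
    by (rule dependent_nat_choice) (use P0 P_Suc in blast)+
  then obtain F where F: "\<forall>n. P (F n) \<and> strict_prefix (snd (F n)) (snd (F (Suc n)))" by blast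
  show ?thesis
    by (intro exI[of _ "\<lambda>n. fst (F n)"] exI[of _ "\<lambda>n. snd (F n)"]) (use F in \<open>simp add: P_def\<close>)
qed

text \<open>A homomorphism assigns a clique to every tuple, and the common prefixes \<open>s\<^sub>n\<close> given by
  \<open>ramsey_prefix_chain\<close> are then cliques forming a strictly increasing chain.\<close>
lemma shift_graph_not_hom_to_clique_tree:
  assumes wf: "wf_graph W" and no_K: "\<not> contains_K_omega W"
  shows "\<not> hom_to (shift_graph r) (clique_tree W)"
proof
  assume "hom_to (shift_graph r) (clique_tree W)"
  then obtain h where h: "is_hom (shift_graph r) (clique_tree W) h" unfolding hom_to_def by blast
  define H where "H X = list_decode (h (list_encode X))" for X
  have H_clique: "clique_list W (H X)" if "X \<in> tuples r UNIV" for X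
    using h that unfolding is_hom_def H_def by (simp add: verts_shift_graph verts_clique_tree)
  have H_adj: "strict_prefix (H X) (H Y) \<or> strict_prefix (H Y) (H X)"
    if "X \<in> tuples r UNIV" "Y \<in> tuples r UNIV" "tl X = butlast Y" for X Y
  proof -
    have "adj (shift_graph r) (list_encode X) (list_encode Y)"
      using that by (simp add: adj_shift_graph)
    then show ?thesis using h unfolding is_hom_def H_def by (simp add: adj_clique_tree)
  qed
  from ramsey_prefix_chain[where H = H and r = r, OF H_adj] obtain A s where A: "\<forall>n. infinite (A n)
      \<and> (\<forall>X\<in>tuples r (A n). prefix (s n) (H X)) \<and> strict_prefix (s n) (s (Suc n))"
    by blast
  have clique: "clique_list W (s n)" for n
  proof -
    have "infinite (A n)" using A by blast
    then obtain X where X: "X \<in> tuples r (A n)" using tuple_above by blast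
    then have "clique_list W (H X)" using H_clique unfolding tuples_def by blast
    moreover have "prefix (s n) (H X)" using A X by blast
    ultimately show ?thesis by (rule clique_list_prefix)
  qed
  moreover have "strict_prefix (s n) (s (Suc n))" for n using A by blast
  ultimately show False using contains_K_omega_if_clique_sequence wf no_K by blast
qed

lemma triangle_free_shift_graph:
  assumes "4 \<le> r"
  shows "triangle_free (shift_graph r)"
proof (rule triangle_free_if_no_short_odd_walk)
  show "wf_graph (shift_graph r)" using wf_shift_graph assms by simp
  show "\<not> walk_betw (shift_graph r) z z 3" for z
    using shift_graph_odd_girth assms by fastforce
qed

lemma not_bipartite_if_hom_from_shift_graph:
  assumes "hom_to (shift_graph r) G"
  shows "\<not> bipartite G"
proof
  assume "bipartite G"
  moreover have "0 \<in> verts K3" by (simp add: K3_def verts_def)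
  ultimately have "hom_to (shift_graph r) (clique_tree K3)"
    using bipartite_hom_to_clique_tree hom_to_trans assms by blast
  moreover have "wf_graph K3" "\<not> contains_K_omega K3"
    using GRA_omega_K3 unfolding GRA_omega_def by auto
  ultimately show False using shift_graph_not_hom_to_clique_tree by blast
qed

lemma GRA_omega_shift_graph:
  assumes "4 \<le> r"
  shows "GRA_omega (shift_graph r)"
proof -
  have "hom_to (shift_graph r) (shift_graph r)"
    unfolding hom_to_def is_hom_def by (intro exI[of _ id]) simp
  then show ?thesis
    unfolding GRA_omega_def
    using wf_shift_graph triangle_free_shift_graph triangle_free_no_K_omega
      not_bipartite_if_hom_from_shift_graph assms by simp
qed

section \<open>A universal triangle-free graph\<close>

text \<open>Vertex \<open>n\<close> codes the finite set \<open>A\<close> in the first component of \<open>prod_decode n\<close>, and \<open>A\<close>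
  becomes its set of smaller neighbours if it lies below \<open>n\<close> and is independent so far. Every
  finite independent set thus has codes above any bound, which lets a triangle-free graph be
  embedded greedily, vertex by vertex.\<close>
function lower_nbrs :: "nat \<Rightarrow> nat set" where
  "lower_nbrs n = (let A = set_decode (fst (prod_decode n)) in
     if A \<subseteq> {..<n} then (if \<forall>y\<in>A. \<forall>x\<in>A. x \<notin> lower_nbrs y then A else {}) else {})"
  by auto
termination by (relation "measure id") auto

declare lower_nbrs.simps [simp del]

lemma lower_nbrs_less: "x \<in> lower_nbrs n \<Longrightarrow> x < n"
  by (subst (asm) lower_nbrs.simps) (auto simp: Let_def split: if_splits)

lemma lower_nbrs_independent: "x \<in> lower_nbrs n \<Longrightarrow> y \<in> lower_nbrs n \<Longrightarrow> x \<notin> lower_nbrs y"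
  by (subst (asm) (1 2) lower_nbrs.simps) (auto simp: Let_def split: if_splits)

definition code_nbrs :: "nat set \<Rightarrow> nat \<Rightarrow> nat" where
  "code_nbrs A b = prod_encode (set_encode A, Suc (b + \<Sum>A))"

lemma code_nbrs_greater: "b < code_nbrs A b"
  unfolding code_nbrs_def using le_prod_encode_2[of "Suc (b + \<Sum>A)" "set_encode A"] by simp

lemma lower_nbrs_code_nbrs:
  assumes "finite A" "\<forall>y\<in>A. \<forall>x\<in>A. x \<notin> lower_nbrs y"
  shows "lower_nbrs (code_nbrs A b) = A"
proof -
  have "x < code_nbrs A b" if "x \<in> A" for x
  proof -
    have "x \<le> \<Sum>A" using assms(1) that member_le_sum[of x A id] by simp
    also have "\<dots> < code_nbrs A b"
      unfolding code_nbrs_def using le_prod_encode_2[of "Suc (b + \<Sum>A)" "set_encode A"] by simp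
    finally show ?thesis .
  qed
  then show ?thesis using assms
    by (subst lower_nbrs.simps) (auto simp: Let_def code_nbrs_def)
qed

definition universal_tf :: graph where
  "universal_tf = (UNIV, \<lambda>x y. x \<in> lower_nbrs y \<or> y \<in> lower_nbrs x)"

lemma verts_universal_tf: "verts universal_tf = UNIV"
  by (simp add: universal_tf_def verts_def)

lemma adj_universal_tf: "adj universal_tf x y \<longleftrightarrow> x \<in> lower_nbrs y \<or> y \<in> lower_nbrs x"
  by (simp add: universal_tf_def adj_def)

lemma wf_universal_tf: "wf_graph universal_tf"
  unfolding wf_graph_def verts_universal_tf adj_universal_tf using lower_nbrs_less by blast

lemma triangle_free_universal_tf: "triangle_free universal_tf"
  unfolding triangle_free_def
proof (intro allI impI notI)
  fix a b c
  assume ab: "adj universal_tf a b" and bc: "adj universal_tf b c" and ac: "adj universal_tf a c"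
  have lower: "x \<in> lower_nbrs z" if "adj universal_tf x z" "x < z" for x z
    using that lower_nbrs_less unfolding adj_universal_tf by fastforce
  have two_lower: "\<not> adj universal_tf x y"
    if "adj universal_tf x z" "adj universal_tf y z" "x < z" "y < z" for x y z
    using lower[OF that(1,3)] lower[OF that(2,4)] lower_nbrs_independent
    unfolding adj_universal_tf by blast
  have "adj universal_tf b a" "adj universal_tf c b" "adj universal_tf c a"
    using ab bc ac wf_graph_sym[OF wf_universal_tf] by blast+
  moreover have "a \<noteq> b" "b \<noteq> c" "a \<noteq> c"
    using ab bc ac wf_graph_irrefl[OF wf_universal_tf] by blast+
  then consider "b < a" "c < a" | "a < b" "c < b" | "a < c" "b < c" by linarith
  ultimately show False using ab bc ac two_lower by cases blast+
qed

function tf_embedding :: "graph \<Rightarrow> nat \<Rightarrow> nat" where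
  "tf_embedding G i =
     code_nbrs (tf_embedding G ` {j. j < i \<and> adj G j i}) (\<Sum>j<i. tf_embedding G j)"
  by auto
termination by (relation "measure snd") auto

declare tf_embedding.simps [simp del]

lemma tf_embedding_strict_mono: "j < i \<Longrightarrow> tf_embedding G j < tf_embedding G i"
proof -
  assume "j < i"
  then have "tf_embedding G j \<le> (\<Sum>j<i. tf_embedding G j)" by (simp add: member_le_sum)
  also have "\<dots> < tf_embedding G i"
    by (subst (2) tf_embedding.simps) (rule code_nbrs_greater)
  finally show ?thesis .
qed

lemma lower_nbrs_tf_embedding:
  assumes "triangle_free G"
  shows "lower_nbrs (tf_embedding G i) = tf_embedding G ` {j. j < i \<and> adj G j i}"
proof (induct i rule: less_induct)
  case (less i)
  let ?F = "tf_embedding G"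
  have "x \<notin> lower_nbrs y"
    if x: "x \<in> ?F ` {j. j < i \<and> adj G j i}" and y: "y \<in> ?F ` {j. j < i \<and> adj G j i}" for x y
  proof
    assume xy: "x \<in> lower_nbrs y"
    obtain a b where ab: "x = ?F a" "y = ?F b" "a < i" "b < i" "adj G a i" "adj G b i"
      using x y by blast
    then have "a < b" using xy lower_nbrs_less tf_embedding_strict_mono by (metis not_less_iff_gr_or_eq)
    then obtain j where "?F a = ?F j" "j < b" "adj G j b" using xy ab less[of b] by auto
    then have "adj G a b" using tf_embedding_strict_mono by (metis not_less_iff_gr_or_eq)
    then show False using ab assms unfolding triangle_free_def by blast
  qed
  then show ?case by (subst tf_embedding.simps) (simp add: lower_nbrs_code_nbrs)
qed

lemma triangle_free_hom_to_universal_tf: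
  assumes wf: "wf_graph G" and "triangle_free G"
  shows "hom_to G universal_tf"
proof -
  let ?F = "tf_embedding G"
  have "adj universal_tf (?F u) (?F v)" if "adj G u v" for u v
  proof (cases u v rule: linorder_cases)
    case less
    then show ?thesis using that lower_nbrs_tf_embedding[OF assms(2), of v]
      by (auto simp: adj_universal_tf)
  next
    case equal
    then show ?thesis using that wf_graph_irrefl[OF wf] by blast
  next
    case greater
    then show ?thesis using wf_graph_sym[OF wf that] lower_nbrs_tf_embedding[OF assms(2), of u]
      by (auto simp: adj_universal_tf)
  qed
  then show ?thesis unfolding hom_to_def is_hom_def verts_universal_tf by blast
qed

lemma GRA_omega_universal_tf: "GRA_omega universal_tf"
proof -
  have "hom_to (shift_graph 4) universal_tf"
    using triangle_free_hom_to_universal_tf wf_shift_graph triangle_free_shift_graph by simp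
  then show ?thesis
    unfolding GRA_omega_def
    using wf_universal_tf not_bipartite_if_hom_from_shift_graph triangle_free_no_K_omega
      triangle_free_universal_tf by blast
qed

lemma hom_to_K3_or_hom_to_universal_tf:
  "wf_graph G \<Longrightarrow> hom_to K3 G \<or> hom_to G universal_tf"
  using hom_to_K3_if_not_triangle_free triangle_free_hom_to_universal_tf by blast

lemma GRA_omega_independent_exists:
  assumes "GRA_omega G"
  shows "\<exists>G'. GRA_omega G' \<and> independent G' G"
proof -
  have wf: "wf_graph G" and "\<not> bipartite G" and no_K: "\<not> contains_K_omega G"
    using assms unfolding GRA_omega_def by auto
  then obtain z L where "odd L" "walk_betw G z z L"
    using not_bipartite_odd_closed_walk by blast
  show ?thesis
  proof (cases "hom_to G (clique_tree G)")
    case True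
    define r where "r = L + 4"
    have "\<not> hom_to (shift_graph r) G"
      using True hom_to_trans shift_graph_not_hom_to_clique_tree[OF wf no_K] by blast
    moreover have "\<not> hom_to G (shift_graph r)"
    proof
      assume "hom_to G (shift_graph r)"
      then obtain f where "is_hom G (shift_graph r) f" unfolding hom_to_def by blast
      then have "walk_betw (shift_graph r) (f z) (f z) L"
        using walk_betw_hom \<open>walk_betw G z z L\<close> by blast
      then show False using shift_graph_odd_girth \<open>odd L\<close> unfolding r_def by fastforce
    qed
    moreover have "GRA_omega (shift_graph r)" using GRA_omega_shift_graph r_def by simp
    ultimately show ?thesis unfolding independent_def by (intro exI[of _ "shift_graph r"]) simp
  next
    case False
    then show ?thesis
      using GRA_omega_clique_tree[OF assms] clique_tree_not_hom_to_base[OF wf no_K]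
      unfolding independent_def by blast
  qed
qed

theorem corollary2:
  fixes t :: nat
  assumes "t > 0"
  shows "(\<forall>Gs :: nat \<Rightarrow> graph. (\<forall>i<t. GRA_omega (Gs i)) \<longrightarrow>
            (\<exists>G. GRA_omega G \<and> (\<forall>i<t. independent G (Gs i))))
         \<longleftrightarrow> t = 1"
proof
  assume indep_exists: "\<forall>Gs :: nat \<Rightarrow> graph. (\<forall>i<t. GRA_omega (Gs i)) \<longrightarrow>
            (\<exists>G. GRA_omega G \<and> (\<forall>i<t. independent G (Gs i)))"
  define Gs where "Gs i = (if i = 0 then K3 else universal_tf)" for i :: nat
  have "\<forall>i<t. GRA_omega (Gs i)" unfolding Gs_def using GRA_omega_K3 GRA_omega_universal_tf by simp
  then obtain G where G: "GRA_omega G" "\<forall>i<t. independent G (Gs i)" using indep_exists by blast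
  have "independent G (Gs 0)" using G(2) assms by blast
  moreover have "independent G (Gs 1)" if "1 < t" using G(2) that by blast
  moreover have "\<not> (independent G K3 \<and> independent G universal_tf)"
    using G(1) hom_to_K3_or_hom_to_universal_tf unfolding GRA_omega_def independent_def by blast
  ultimately show "t = 1" using assms unfolding Gs_def by (cases "1 < t") auto
next
  assume "t = 1"
  then show "\<forall>Gs :: nat \<Rightarrow> graph. (\<forall>i<t. GRA_omega (Gs i)) \<longrightarrow>
            (\<exists>G. GRA_omega G \<and> (\<forall>i<t. independent G (Gs i)))"
    using GRA_omega_independent_exists by simp
qed

end
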